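(* Let $f:\mathbb{R}^{m\times n}\to\mathbb{R}$ be smooth and strongly convex, $\omega\neq 0$, and let $S_\omega$, $\mathcal D_\omega$, $\theta_A$ be as in the context. Then: (i) A point $(U_*,V_* )\in\mathcal D_\omega$ is a fixed point of $S_\omega$ if and only if $U_*$ and $V_*$ have full column rank $k$ and $(U_*,V_* )$ is a critical point of $F$; in particular every critical point of $F$ with $U_*,V_*$ of full column rank lies in $\mathcal D_\omega$ and is a fixed point of $S_\omega$. (ii) For every $(U,V)\in\mathcal D_\omega$ and every $A\in\mathrm{GL}(k)$, one has $\theta_A\cdot(U,V)\in\mathcal D_\omega$ and $S_\omega(\theta_A\cdot(U,V))=\theta_A\cdot S_\omega(U,V)$. (iii) Consequently, at a fixed point $(U_*,V_* )$ of $S_\omega$ (where $S_\omega$ is smooth), $S_\omega'(U_*A,V_*A^{-\top})=\theta_A\circ S_\omega'(U_*,V_* )\circ\theta_A^{-1}$, so the derivatives of $S_\omega$ at all points of the orbit $\{\theta_A\cdot(U_*,V_* )\}$ have the same eigenvalues.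
   Context: Let $F(U,V)=f(UV^\top)$ for $U\in\mathbb{R}^{m\times k}$, $V\in\mathbb{R}^{n\times k}$. For $V$ of full column rank, $\hat S_1(V)=\operatorname{argmin}_U F(U,V)$ (unique); for $U$ of full column rank, $\hat S_2(U)=\operatorname{argmin}_V F(U,V)$ (unique). For $\omega\in\mathbb{R}$ define \[ S_\omega(U,V)=(1-\omega)(U,V)+\omega\Big(\hat S_1(V),\ \hat S_2\big((1-\omega)U+\omega\hat S_1(V)\big)\Big), \] defined on $\mathcal D_\omega=\{(U,V): V \text{ and } (1-\omega)U+\omega\hat S_1(V)\text{ have full column rank } k\}$. For $A\in\mathrm{GL}(k)$, $\theta_A\cdot(U,V)=(UA,VA^{-\top})$, a linear invertible map on $\mathbb{R}^{m\times k}\times\mathbb{R}^{n\times k}$ with $\theta_A^{-1}=\theta_{A^{-1}}$. *)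

theory Defs
  imports "HOL-Analysis.Analysis"
begin

primrec iter_dderiv :: "('a::real_normed_vector \<Rightarrow> real) \<Rightarrow> 'a list \<Rightarrow> 'a \<Rightarrow> real" where
  "iter_dderiv f [] = f"
| "iter_dderiv f (h # hs) = (\<lambda>x. frechet_derivative (iter_dderiv f hs) (at x) h)"

definition smooth_fun :: "('a::real_normed_vector \<Rightarrow> real) \<Rightarrow> bool" where
  "smooth_fun f \<longleftrightarrow> (\<forall>hs x. iter_dderiv f hs differentiable (at x))"

text \<open>Strong convexity with respect to the (Frobenius / Euclidean) norm.\<close>
definition strongly_convex :: "('a::real_normed_vector \<Rightarrow> real) \<Rightarrow> bool" where
  "strongly_convex f \<longleftrightarrow> (\<exists>\<mu>>0. convex_on UNIV (\<lambda>x. f x - \<mu> / 2 * (norm x)\<^sup>2))"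

definition Fobj :: "(real^'n^'m \<Rightarrow> real) \<Rightarrow> real^'k^'m \<Rightarrow> real^'k^'n \<Rightarrow> real" where
  "Fobj f U V = f (U ** transpose V)"

definition full_col_rank :: "real^'k^'r \<Rightarrow> bool" where
  "full_col_rank M \<longleftrightarrow> rank M = CARD('k)"

text \<open>Partial minimizers (unique when the other factor has full column rank).\<close>
definition S1hat :: "(real^'n^'m \<Rightarrow> real) \<Rightarrow> real^'k^'n \<Rightarrow> real^'k^'m" where
  "S1hat f V = (THE U. \<forall>U'. Fobj f U V \<le> Fobj f U' V)"

definition S2hat :: "(real^'n^'m \<Rightarrow> real) \<Rightarrow> real^'k^'m \<Rightarrow> real^'k^'n" where
  "S2hat f U = (THE V. \<forall>V'. Fobj f U V \<le> Fobj f U V')"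

definition Somega :: "(real^'n^'m \<Rightarrow> real) \<Rightarrow> real \<Rightarrow> (real^'k^'m) \<times> (real^'k^'n) \<Rightarrow> (real^'k^'m) \<times> (real^'k^'n)" where
  "Somega f \<omega> UV = (let U = fst UV; V = snd UV; U1 = S1hat f V;
                      W = (1 - \<omega>) *\<^sub>R U + \<omega> *\<^sub>R U1
                  in (1 - \<omega>) *\<^sub>R (U, V) + \<omega> *\<^sub>R (U1, S2hat f W))"

definition Domega :: "(real^'n^'m \<Rightarrow> real) \<Rightarrow> real \<Rightarrow> ((real^'k^'m) \<times> (real^'k^'n)) set" where
  "Domega f \<omega> = {(U, V). full_col_rank V \<and>
                     full_col_rank ((1 - \<omega>) *\<^sub>R U + \<omega> *\<^sub>R S1hat f V)}"

definition theta :: "real^'k^'k \<Rightarrow> (real^'k^'m) \<times> (real^'k^'n) \<Rightarrow> (real^'k^'m) \<times> (real^'k^'n)" where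
  "theta A UV = (fst UV ** A, snd UV ** transpose (matrix_inv A))"

definition critical_point :: "(real^'n^'m \<Rightarrow> real) \<Rightarrow> real^'k^'m \<Rightarrow> real^'k^'n \<Rightarrow> bool" where
  "critical_point f U V \<longleftrightarrow>
     ((\<lambda>UV. Fobj f (fst UV) (snd UV)) has_derivative (\<lambda>_. 0)) (at (U, V))"

end

theory Submission
  imports Defs
begin

(*
  For omega ~= 0, (U, V) is a fixed point of S_omega exactly when U = S1hat V and V = S2hat U.
  Once one factor has full column rank, F as a function of the other factor is a strongly
  convex function composed with an injective linear map: it has a unique minimizer, and a
  point is that minimizer iff the partial derivative vanishes there.  So the fixed points are
  the critical points of F with both factors of full column rank.

  Equivariance rests on F(U A, V) = F(U, V A^T): it makes both partial minimizers, and with them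
  S_omega, commute with theta_A.  Full column rank is an open condition, so D_omega contains a
  neighbourhood of each of its points at which S_omega is continuous; there
  S_omega = theta_A o S_omega o theta_A^-1, and the chain rule conjugates the derivative.
*)

lemma has_derivative_comp_linear:
  fixes L :: "'a::euclidean_space \<Rightarrow> 'b::real_normed_vector"
  assumes "(f has_derivative f') (at (L u))" and "linear L"
  shows "((\<lambda>u. f (L u)) has_derivative (\<lambda>h. f' (L h))) (at u)"
proof -
  have "(L has_derivative L) (at u)"
    using assms(2) by (simp add: linear_conv_bounded_linear bounded_linear_imp_has_derivative)
  from has_derivative_compose[OF this assms(1)] show ?thesis by (simp add: o_def)
qed

lemma has_derivative_zero_iff:
  assumes "(g has_derivative g') (at x)"
  shows "(g has_derivative (\<lambda>_. 0)) (at x) \<longleftrightarrow> g' = (\<lambda>_. 0)"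
  using assms has_derivative_unique by metis

lemma has_derivative_conjugate:
  fixes S :: "'a::real_normed_vector \<Rightarrow> 'a"
  assumes S: "(S has_derivative D) (at x)"
    and T: "bounded_linear T" and T': "bounded_linear T'"
    and inverse: "\<And>z. T' (T z) = z" "\<And>z. T (T' z) = z"
    and "open N" "x \<in> N" and commute: "\<And>z. z \<in> N \<Longrightarrow> S (T z) = T (S z)"
  shows "(S has_derivative (T \<circ> D \<circ> T')) (at (T x))"
proof -
  have "((\<lambda>z. T (S (T' z))) has_derivative (\<lambda>h. T (D (T' h)))) (at (T x))"
  proof -
    have "(S has_derivative D) (at (T' (T x)))" using S inverse by simp
    from has_derivative_compose[OF bounded_linear_imp_has_derivative[OF T'] this]
    have "((\<lambda>z. S (T' z)) has_derivative (\<lambda>h. D (T' h))) (at (T x))" .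
    from has_derivative_compose[OF this bounded_linear_imp_has_derivative[OF T]]
    show ?thesis .
  qed
  moreover have "open (T' -` N)"
    using open_vimage[OF \<open>open N\<close> linear_continuous_on[OF T']] by simp
  moreover have "T x \<in> T' -` N" using \<open>x \<in> N\<close> inverse by simp
  moreover have "T (S (T' z)) = S z" if "z \<in> T' -` N" for z
    using commute[of "T' z"] that inverse by simp
  ultimately show ?thesis
    unfolding comp_def by (rule has_derivative_transform_within_open)
qed

section \<open>Strongly convex functions composed with linear maps\<close>

lemma convex_on_UNIV_imp_above_tangent:
  fixes h :: "'a::real_normed_vector \<Rightarrow> real"
  assumes cv: "convex_on UNIV h" and d: "(h has_derivative h') (at x)"
  shows "h x + h' (y - x) \<le> h y"
proof -
  define g where "g t = h (x + t *\<^sub>R (y - x))" for t :: real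
  have cg: "convex_on UNIV g"
  proof (rule convex_onI)
    fix t a b :: real assume t: "0 < t" "t < 1"
    have "x + ((1 - t) *\<^sub>R a + t *\<^sub>R b) *\<^sub>R (y - x)
        = (1 - t) *\<^sub>R (x + a *\<^sub>R (y - x)) + t *\<^sub>R (x + b *\<^sub>R (y - x))"
      by (simp add: algebra_simps)
    then show "g ((1 - t) *\<^sub>R a + t *\<^sub>R b) \<le> (1 - t) * g a + t * g b"
      unfolding g_def using convex_onD[OF cv, of t] t by simp
  qed simp
  have dg: "(g has_field_derivative h' (y - x)) (at 0 within UNIV)"
  proof -
    have "((\<lambda>t. x + t *\<^sub>R (y - x)) has_derivative (\<lambda>t. t *\<^sub>R (y - x))) (at 0)"
      by (auto intro!: derivative_eq_intros)
    from has_derivative_compose[OF this] d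
    have "(g has_derivative (\<lambda>t. h' (t *\<^sub>R (y - x)))) (at 0)"
      unfolding g_def by (simp add: o_def)
    moreover have "(\<lambda>t. h' (t *\<^sub>R (y - x))) = (*) (h' (y - x))"
      using has_derivative_linear[OF d] by (auto simp: linear_scale)
    ultimately show ?thesis by (simp add: has_field_derivative_def)
  qed
  from convex_on_imp_above_tangent[OF cg _ _ _ dg, of 1]
  have "h' (y - x) * (1 - 0) \<le> g 1 - g 0" by simp
  then show ?thesis unfolding g_def by simp
qed

lemma strongly_convex_imp_above_tangent:
  fixes f :: "'a::real_inner \<Rightarrow> real"
  assumes "strongly_convex f"
  obtains \<mu> where "\<mu> > 0"
    "\<And>x f' y. (f has_derivative f') (at x) \<Longrightarrow>
       f x + f' (y - x) + \<mu> / 2 * (norm (y - x))\<^sup>2 \<le> f y"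
proof -
  obtain \<mu> where "\<mu> > 0" and cv: "convex_on UNIV (\<lambda>x. f x - \<mu> / 2 * (norm x)\<^sup>2)"
    using assms unfolding strongly_convex_def by blast
  have "f x + f' (y - x) + \<mu> / 2 * (norm (y - x))\<^sup>2 \<le> f y"
    if d: "(f has_derivative f') (at x)" for x f' y
  proof -
    have "((\<lambda>x. f x - \<mu> / 2 * (x \<bullet> x)) has_derivative
            (\<lambda>v. f' v - \<mu> / 2 * (v \<bullet> x + x \<bullet> v))) (at x)"
      by (auto intro!: derivative_eq_intros d)
    then have "((\<lambda>x. f x - \<mu> / 2 * (norm x)\<^sup>2) has_derivative
            (\<lambda>v. f' v - \<mu> / 2 * (v \<bullet> x + x \<bullet> v))) (at x)"
      by (simp add: power2_norm_eq_inner)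
    from convex_on_UNIV_imp_above_tangent[OF cv this, of y]
    have tangent: "f x - \<mu> / 2 * (x \<bullet> x) + (f' (y - x) - \<mu> / 2 * ((y - x) \<bullet> x + x \<bullet> (y - x)))
          \<le> f y - \<mu> / 2 * (y \<bullet> y)"
      by (simp add: power2_norm_eq_inner)
    have norm_diff: "(norm (y - x))\<^sup>2 = y \<bullet> y - 2 * (x \<bullet> y) + x \<bullet> x"
      by (simp add: power2_norm_eq_inner inner_diff_left inner_diff_right inner_commute)
    have inner_sum: "(y - x) \<bullet> x + x \<bullet> (y - x) = 2 * (x \<bullet> y) - 2 * (x \<bullet> x)"
      by (simp add: inner_diff_left inner_diff_right inner_commute)
    show ?thesis
      using tangent unfolding norm_diff inner_sum by (simp add: algebra_simps)
  qed
  with \<open>\<mu> > 0\<close> show ?thesis using that by blast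
qed

lemma strongly_convex_coercive:
  fixes f :: "'a::real_inner \<Rightarrow> real"
  assumes sc: "strongly_convex f" and d: "f differentiable (at 0)"
  obtains R where "R \<ge> 0" "\<And>y. R < norm y \<Longrightarrow> f 0 < f y"
proof -
  obtain \<mu> where "\<mu> > 0" and tangent: "\<And>x f' y. (f has_derivative f') (at x) \<Longrightarrow>
      f x + f' (y - x) + \<mu> / 2 * (norm (y - x))\<^sup>2 \<le> f y"
    using strongly_convex_imp_above_tangent[OF sc] by blast
  obtain f0 where d0: "(f has_derivative f0) (at 0)"
    using d unfolding differentiable_def by blast
  obtain B where "B > 0" and B: "\<And>y. norm (f0 y) \<le> norm y * B"
    using bounded_linear.pos_bounded[OF has_derivative_bounded_linear[OF d0]] by blast
  have "f 0 < f y" if y: "2 * B / \<mu> < norm y" for y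
  proof -
    have "2 * B < \<mu> * norm y" using y \<open>\<mu> > 0\<close> by (simp add: field_simps)
    then have "norm y * (2 * B) < norm y * (\<mu> * norm y)"
      using \<open>B > 0\<close> \<open>\<mu> > 0\<close> y
      by (intro mult_strict_left_mono) (auto simp: field_simps)
    then have "norm y * B < \<mu> / 2 * (norm y)\<^sup>2"
      by (simp add: power2_eq_square algebra_simps)
    moreover have "- (norm y * B) \<le> f0 y" using B[of y] by simp
    ultimately show ?thesis using tangent[OF d0, of y] by simp
  qed
  moreover have "0 \<le> 2 * B / \<mu>" using \<open>B > 0\<close> \<open>\<mu> > 0\<close> by simp
  ultimately show ?thesis using that by blast
qed

lemma strongly_convex_linear_comp_has_min:
  fixes f :: "'b::euclidean_space \<Rightarrow> real" and L :: "'a::euclidean_space \<Rightarrow> 'b"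
  assumes sc: "strongly_convex f" and diff: "\<And>x. f differentiable (at x)" and lin: "linear L"
  obtains u where "\<And>u'. f (L u) \<le> f (L u')"
proof -
  obtain R where "R \<ge> 0" and far: "\<And>y. R < norm y \<Longrightarrow> f 0 < f y"
    using strongly_convex_coercive[OF sc diff] by blast
  define K where "K = cball 0 R \<inter> range L"
  have "subspace (range L)" by (rule linear_subspace_image[OF lin subspace_UNIV])
  then have "closed (range L)" by (rule closed_subspace)
  then have "compact K" unfolding K_def by (intro compact_Int_closed) auto
  have "0 \<in> K"
    unfolding K_def using \<open>R \<ge> 0\<close> linear_0[OF lin] by (auto intro: range_eqI[of _ _ 0])
  have "continuous_on K f"
    using diff differentiable_imp_continuous_within continuous_at_imp_continuous_on by blast
  then obtain y where "y \<in> K" and min: "\<And>z. z \<in> K \<Longrightarrow> f y \<le> f z"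
    using continuous_attains_inf[OF \<open>compact K\<close>] \<open>0 \<in> K\<close> by blast
  then obtain u where u: "y = L u" unfolding K_def by auto
  have "f (L u) \<le> f (L u')" for u'
  proof (cases "norm (L u') \<le> R")
    case True then show ?thesis using min u unfolding K_def by auto
  next
    case False
    then have "f 0 < f (L u')" using far by simp
    then show ?thesis using min[OF \<open>0 \<in> K\<close>] u by simp
  qed
  then show ?thesis using that by blast
qed

lemma strongly_convex_linear_comp_critical_growth:
  fixes f :: "'b::euclidean_space \<Rightarrow> real" and L :: "'a::euclidean_space \<Rightarrow> 'b"
  assumes sc: "strongly_convex f" and d: "f differentiable (at (L u))" and lin: "linear L"
    and crit: "((\<lambda>u. f (L u)) has_derivative (\<lambda>_. 0)) (at u)"
  obtains \<mu> where "\<mu> > 0" "\<And>u'. f (L u) + \<mu> / 2 * (norm (L u' - L u))\<^sup>2 \<le> f (L u')"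
proof -
  obtain \<mu> where "\<mu> > 0" and tangent: "\<And>x f' y. (f has_derivative f') (at x) \<Longrightarrow>
      f x + f' (y - x) + \<mu> / 2 * (norm (y - x))\<^sup>2 \<le> f y"
    using strongly_convex_imp_above_tangent[OF sc] by blast
  obtain f' where f': "(f has_derivative f') (at (L u))"
    using d unfolding differentiable_def by blast
  have f'L: "(\<lambda>h. f' (L h)) = (\<lambda>_. 0)"
    using has_derivative_unique[OF has_derivative_comp_linear[OF f' lin] crit] .
  have "f' (L u' - L u) = 0" for u'
    using fun_cong[OF f'L, of "u' - u"] linear_diff[OF lin, of u' u] by simp
  then have "f (L u) + \<mu> / 2 * (norm (L u' - L u))\<^sup>2 \<le> f (L u')" for u'
    using tangent[OF f', of "L u'"] by simp
  with \<open>\<mu> > 0\<close> show ?thesis using that by blast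
qed

lemma strongly_convex_linear_comp_min_iff_critical:
  fixes f :: "'b::euclidean_space \<Rightarrow> real" and L :: "'a::euclidean_space \<Rightarrow> 'b"
  assumes sc: "strongly_convex f" and d: "f differentiable (at (L u))" and lin: "linear L"
  shows "(\<forall>u'. f (L u) \<le> f (L u')) \<longleftrightarrow> ((\<lambda>u. f (L u)) has_derivative (\<lambda>_. 0)) (at u)"
proof
  assume min: "\<forall>u'. f (L u) \<le> f (L u')"
  obtain f' where "(f has_derivative f') (at (L u))"
    using d unfolding differentiable_def by blast
  from has_derivative_comp_linear[OF this lin]
  have deriv: "((\<lambda>u. f (L u)) has_derivative (\<lambda>h. f' (L h))) (at u)" .
  moreover have "(\<lambda>h. f' (L h)) = (\<lambda>_. 0)"
    using min by (intro differential_zero_maxmin[OF _ _ deriv, of UNIV]) auto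
  ultimately show "((\<lambda>u. f (L u)) has_derivative (\<lambda>_. 0)) (at u)" by simp
next
  assume "((\<lambda>u. f (L u)) has_derivative (\<lambda>_. 0)) (at u)"
  from strongly_convex_linear_comp_critical_growth[OF sc d lin this]
  obtain \<mu> where "\<mu> > 0" and growth: "\<And>u'. f (L u) + \<mu> / 2 * (norm (L u' - L u))\<^sup>2 \<le> f (L u')"
    by blast
  show "\<forall>u'. f (L u) \<le> f (L u')"
  proof
    fix u'
    have "0 \<le> \<mu> / 2 * (norm (L u' - L u))\<^sup>2" using \<open>\<mu> > 0\<close> by simp
    then show "f (L u) \<le> f (L u')" using growth[of u'] by linarith
  qed
qed

lemma strongly_convex_linear_comp_ex1_min:
  fixes f :: "'b::euclidean_space \<Rightarrow> real" and L :: "'a::euclidean_space \<Rightarrow> 'b"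
  assumes sc: "strongly_convex f" and diff: "\<And>x. f differentiable (at x)"
    and lin: "linear L" and "inj L"
  shows "\<exists>!u. \<forall>u'. f (L u) \<le> f (L u')"
proof -
  obtain u where min: "\<And>u'. f (L u) \<le> f (L u')"
    using strongly_convex_linear_comp_has_min[OF sc diff lin] by blast
  then have "((\<lambda>u. f (L u)) has_derivative (\<lambda>_. 0)) (at u)"
    using strongly_convex_linear_comp_min_iff_critical[OF sc diff lin] by blast
  from strongly_convex_linear_comp_critical_growth[OF sc diff lin this]
  obtain \<mu> where "\<mu> > 0" and growth: "\<And>u'. f (L u) + \<mu> / 2 * (norm (L u' - L u))\<^sup>2 \<le> f (L u')"
    by blast
  have "v = u" if "\<forall>u'. f (L v) \<le> f (L u')" for v
  proof -
    have "f (L v) \<le> f (L u)" using that by blast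
    then have "\<mu> / 2 * (norm (L v - L u))\<^sup>2 \<le> 0" using growth[of v] by linarith
    then have "L v = L u" using \<open>\<mu> > 0\<close> by (simp add: mult_le_0_iff)
    then show ?thesis using \<open>inj L\<close> by (simp add: inj_eq)
  qed
  with min show ?thesis by blast
qed

section \<open>Matrices of full column rank\<close>

lemma matrix_add_rdistrib: "((A::'a::semiring_1^'n^'m) + B) ** C = A ** C + B ** C"
  by (simp add: vec_eq_iff matrix_matrix_mult_def sum.distrib distrib_right)

lemma matrix_lincomb_mult_right:
  "(a *\<^sub>R (X::real^'k^'r) + b *\<^sub>R Y) ** C = a *\<^sub>R (X ** C) + b *\<^sub>R (Y ** C)"
  by (simp add: matrix_add_rdistrib scalar_matrix_assoc)

lemma linear_matrix_mult_right: "linear (\<lambda>X::real^'n^'m. X ** C)"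
  by (rule linearI) (simp_all add: matrix_add_rdistrib scalar_matrix_assoc)

lemma linear_matrix_mult_transpose_left: "linear (\<lambda>Y::real^'k^'n. U ** transpose Y)"
  by (rule linearI) (simp_all add: matrix_add_ldistrib transpose_def matrix_scalar_ac vec_eq_iff
      matrix_matrix_mult_def sum.distrib distrib_left sum_distrib_left algebra_simps)

lemma bounded_bilinear_matrix_mult_transpose:
  "bounded_bilinear (\<lambda>(X::real^'k^'m) (Y::real^'k^'n). X ** transpose Y)"
proof -
  have "bilinear (\<lambda>(X::real^'k^'m) (Y::real^'k^'n). X ** transpose Y)"
    unfolding bilinear_def using linear_matrix_mult_transpose_left linear_matrix_mult_right by blast
  then show ?thesis by (simp add: bilinear_conv_bounded_bilinear)
qed

lemma full_col_rank_iff_inj: "full_col_rank M \<longleftrightarrow> inj ((*v) M)"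
  by (simp add: full_col_rank_def full_rank_injective)

lemma matrix_mult_transpose_row:
  "((X::real^'k^'m) ** transpose (V::real^'k^'n)) $ i = V *v (X $ i)"
  by (simp add: vec_eq_iff matrix_matrix_mult_def matrix_vector_mult_def transpose_def mult.commute)

lemma inj_matrix_mult_transpose_right:
  assumes "full_col_rank V"
  shows "inj (\<lambda>X::real^'k^'m. X ** transpose V)"
proof
  fix X Y :: "real^'k^'m"
  assume "X ** transpose V = Y ** transpose V"
  then have "V *v (X $ i) = V *v (Y $ i)" for i
    by (metis matrix_mult_transpose_row)
  moreover have "inj ((*v) V)" using assms by (simp add: full_col_rank_iff_inj)
  ultimately have "X $ i = Y $ i" for i by (simp add: inj_eq)
  then show "X = Y" by (simp add: vec_eq_iff)
qed

lemma inj_matrix_mult_transpose_left: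
  assumes "full_col_rank U"
  shows "inj (\<lambda>Y::real^'k^'n. U ** transpose Y)"
proof
  fix X Y :: "real^'k^'n"
  assume "U ** transpose X = U ** transpose Y"
  then have "X ** transpose U = Y ** transpose U"
    by (metis matrix_transpose_mul transpose_transpose)
  then show "X = Y" using inj_matrix_mult_transpose_right[OF assms] by (auto dest: injD)
qed

lemma full_col_rank_mult_invertible:
  assumes "full_col_rank X" and "invertible C"
  shows "full_col_rank (X ** C)"
proof -
  have "inj ((*v) X \<circ> (*v) C)"
    using assms inj_matrix_vector_mult by (auto simp: full_col_rank_iff_inj intro: inj_compose)
  moreover have "(*v) X \<circ> (*v) C = (*v) (X ** C)" by (auto simp: matrix_vector_mul_assoc)
  ultimately show ?thesis by (simp add: full_col_rank_iff_inj)
qed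

lemma bounded_bilinear_matrix_vector_mult:
  "bounded_bilinear (\<lambda>(M::real^'k^'r) (x::real^'k). M *v x)"
proof -
  have "linear (\<lambda>M::real^'k^'r. M *v x)" for x :: "real^'k"
    by (rule linearI) (simp_all add: vec_eq_iff matrix_vector_mult_def sum.distrib algebra_simps
        sum_distrib_left)
  then have "bilinear (\<lambda>(M::real^'k^'r) (x::real^'k). M *v x)"
    unfolding bilinear_def using matrix_vector_mul_linear by blast
  then show ?thesis by (simp add: bilinear_conv_bounded_bilinear)
qed

lemma open_full_col_rank: "open {M::real^'k^'r. full_col_rank M}"
proof (rule openI)
  fix M :: "real^'k^'r"
  assume "M \<in> {M. full_col_rank M}"
  then obtain c where "c > 0" and c: "\<And>x. c * norm x \<le> norm (M *v x)"
    using linear_inj_bounded_below_pos[OF matrix_vector_mul_linear]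
    by (auto simp: full_col_rank_iff_inj)
  obtain K where "K > 0" and K: "\<And>N x. norm ((N::real^'k^'r) *v (x::real^'k)) \<le> norm N * norm x * K"
    using bounded_bilinear.pos_bounded[OF bounded_bilinear_matrix_vector_mult] by blast
  have "N \<in> {M. full_col_rank M}" if "N \<in> ball M (c / K)" for N
  proof -
    have close: "norm (N - M) * K < c"
      using that \<open>K > 0\<close> by (simp add: dist_norm norm_minus_commute field_simps)
    have "N *v x \<noteq> 0" if "x \<noteq> 0" for x
    proof
      assume "N *v x = 0"
      then have "norm (M *v x) = norm ((N - M) *v x)"
        by (simp add: matrix_vector_mult_diff_rdistrib)
      also have "\<dots> \<le> norm (N - M) * K * norm x" using K by (simp add: mult_ac)
      also have "\<dots> < c * norm x" using close that by (simp add: mult_strict_right_mono)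
      finally show False using c[of x] by simp
    qed
    then show ?thesis
      using matrix_nonfull_linear_equations_eq[of N] by (auto simp: full_col_rank_def)
  qed
  moreover have "c / K > 0" using \<open>c > 0\<close> \<open>K > 0\<close> by simp
  ultimately show "\<exists>e>0. ball M e \<subseteq> {M. full_col_rank M}" by blast
qed

lemma matrix_inv_right: "invertible A \<Longrightarrow> A ** matrix_inv A = mat 1"
  and matrix_inv_left: "invertible A \<Longrightarrow> matrix_inv A ** A = mat 1"
  unfolding invertible_def matrix_inv_def by (metis (mono_tags, lifting) someI_ex)+

lemma invertible_matrix_inv: "invertible A \<Longrightarrow> invertible (matrix_inv A)"
  using matrix_inv_left matrix_inv_right invertible_def by blast

lemma matrix_inv_matrix_inv:
  fixes A :: "real^'k^'k"
  assumes "invertible A"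
  shows "matrix_inv (matrix_inv A) = A"
proof -
  have "A = A ** (matrix_inv A ** matrix_inv (matrix_inv A))"
    using matrix_inv_right[OF invertible_matrix_inv[OF assms]] by simp
  also have "\<dots> = matrix_inv (matrix_inv A)"
    by (simp add: matrix_mul_assoc matrix_inv_right[OF assms])
  finally show ?thesis by simp
qed

lemma transpose_matrix_inv_mult_transpose:
  fixes A :: "real^'k^'k"
  assumes "invertible A"
  shows "transpose (matrix_inv A) ** transpose A = mat 1"
  by (metis assms matrix_inv_right matrix_transpose_mul transpose_mat)

section \<open>The factorized objective\<close>

lemma Fobj_mult_right: "Fobj f (X ** C) Y = Fobj f X (Y ** transpose C)"
  by (simp add: Fobj_def matrix_transpose_mul matrix_mul_assoc)

lemma Fobj_has_derivative:
  fixes U :: "real^'k^'m" and V :: "real^'k^'n"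
  assumes "(f has_derivative f') (at (U ** transpose V))"
  shows "((\<lambda>p. Fobj f (fst p) (snd p)) has_derivative
           (\<lambda>h. f' (U ** transpose (snd h) + fst h ** transpose V))) (at (U, V))"
proof -
  have "((\<lambda>p::(real^'k^'m) \<times> (real^'k^'n). fst p ** transpose (snd p)) has_derivative
           (\<lambda>h. U ** transpose (snd h) + fst h ** transpose V)) (at (U, V))"
    using bounded_bilinear.FDERIV[OF bounded_bilinear_matrix_mult_transpose,
        of fst "\<lambda>h. fst h" "(U, V)" UNIV snd "\<lambda>h. snd h"]
    by (simp add: has_derivative_fst has_derivative_snd has_derivative_ident)
  from has_derivative_compose[OF this] assms show ?thesis
    by (simp add: Fobj_def o_def)
qed

lemma critical_point_iff_partial:
  fixes U :: "real^'k^'m" and V :: "real^'k^'n"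
  assumes "f differentiable (at (U ** transpose V))"
  shows "critical_point f U V \<longleftrightarrow>
    ((\<lambda>X. Fobj f X V) has_derivative (\<lambda>_. 0)) (at U) \<and>
    ((\<lambda>Y. Fobj f U Y) has_derivative (\<lambda>_. 0)) (at V)"
proof -
  obtain f' where d: "(f has_derivative f') (at (U ** transpose V))"
    using assms unfolding differentiable_def by blast
  have lin: "linear f'" using d by (rule has_derivative_linear)
  have dU: "((\<lambda>X. Fobj f X V) has_derivative (\<lambda>h. f' (h ** transpose V))) (at U)"
    using has_derivative_comp_linear[OF _ linear_matrix_mult_right, of f f' U "transpose V"] d
    by (simp add: Fobj_def)
  have dV: "((\<lambda>Y. Fobj f U Y) has_derivative (\<lambda>h. f' (U ** transpose h))) (at V)"
    using has_derivative_comp_linear[OF _ linear_matrix_mult_transpose_left, of f f' U V] d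
    by (simp add: Fobj_def)
  have "(\<lambda>h. f' (U ** transpose (snd h) + fst h ** transpose V)) = (\<lambda>_. 0) \<longleftrightarrow>
      (\<lambda>h. f' (h ** transpose V)) = (\<lambda>_. 0) \<and> (\<lambda>h. f' (U ** transpose h)) = (\<lambda>_. 0)"
  proof
    assume "(\<lambda>h. f' (U ** transpose (snd h) + fst h ** transpose V)) = (\<lambda>_. 0)"
    then have "f' (U ** transpose b + a ** transpose V) = 0" for a b
      by (metis fst_conv snd_conv)
    from this[of _ 0] this[of 0] show "(\<lambda>h. f' (h ** transpose V)) = (\<lambda>_. 0) \<and>
        (\<lambda>h. f' (U ** transpose h)) = (\<lambda>_. 0)"
      by (simp_all add: fun_eq_iff transpose_def zero_vec_def[symmetric])
  qed (simp add: fun_eq_iff linear_add[OF lin])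
  then show ?thesis
    unfolding critical_point_def
    by (simp add: has_derivative_zero_iff[OF Fobj_has_derivative[OF d]]
        has_derivative_zero_iff[OF dU] has_derivative_zero_iff[OF dV])
qed

section \<open>The relaxed alternating minimization map\<close>

lemma relaxation_eq_iff:
  fixes x y :: "'a::real_vector"
  assumes "\<omega> \<noteq> 0"
  shows "(1 - \<omega>) *\<^sub>R x + \<omega> *\<^sub>R y = x \<longleftrightarrow> y = x"
proof -
  have "(1 - \<omega>) *\<^sub>R x + \<omega> *\<^sub>R y = x + \<omega> *\<^sub>R (y - x)" by (simp add: algebra_simps)
  then show ?thesis using assms by simp
qed

lemma fst_Somega: "fst (Somega f \<omega> (U, V)) = (1 - \<omega>) *\<^sub>R U + \<omega> *\<^sub>R S1hat f V"
  by (simp add: Somega_def Let_def)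

lemma snd_Somega:
  "snd (Somega f \<omega> (U, V)) = (1 - \<omega>) *\<^sub>R V + \<omega> *\<^sub>R S2hat f (fst (Somega f \<omega> (U, V)))"
  by (simp add: Somega_def Let_def)

lemma Domega_iff:
  "(U, V) \<in> Domega f \<omega> \<longleftrightarrow> full_col_rank V \<and> full_col_rank (fst (Somega f \<omega> (U, V)))"
  by (simp add: Domega_def fst_Somega)

lemma Somega_fixed_iff:
  assumes "\<omega> \<noteq> 0"
  shows "Somega f \<omega> (U, V) = (U, V) \<longleftrightarrow> S1hat f V = U \<and> S2hat f U = V"
proof -
  have "Somega f \<omega> (U, V) = (U, V) \<longleftrightarrow>
      fst (Somega f \<omega> (U, V)) = U \<and> snd (Somega f \<omega> (U, V)) = V"
    by (simp add: prod_eq_iff)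
  also have "\<dots> \<longleftrightarrow> S1hat f V = U \<and> S2hat f U = V"
    unfolding snd_Somega by (auto simp: fst_Somega relaxation_eq_iff[OF assms])
  finally show ?thesis .
qed

lemma Domega_neighbourhood:
  assumes "UV \<in> Domega f \<omega>" and "isCont (Somega f \<omega>) UV"
  obtains N where "open N" "UV \<in> N" "N \<subseteq> Domega f \<omega>"
proof -
  obtain U V where UV: "UV = (U, V)" by (cases UV)
  have "isCont (\<lambda>z. fst (Somega f \<omega> z)) UV" using assms(2) by (intro continuous_intros)
  moreover have "fst (Somega f \<omega> UV) \<in> {M. full_col_rank M}"
    using assms(1) by (simp add: UV Domega_iff)
  ultimately obtain N1 where "open N1" "UV \<in> N1"
    and N1: "\<And>z. z \<in> N1 \<Longrightarrow> fst (Somega f \<omega> z) \<in> {M. full_col_rank M}"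
    using open_full_col_rank unfolding continuous_at_open by metis
  define N where "N = N1 \<inter> (UNIV \<times> {M. full_col_rank M})"
  have "open N"
    unfolding N_def using \<open>open N1\<close> open_full_col_rank by (intro open_Int open_Times) auto
  moreover have "UV \<in> N" using \<open>UV \<in> N1\<close> assms(1) by (simp add: N_def UV Domega_iff)
  moreover have "N \<subseteq> Domega f \<omega>" using N1 by (auto simp: N_def Domega_iff)
  ultimately show ?thesis using that by blast
qed

lemma theta_matrix_inv:
  fixes A :: "real^'k^'k" and z :: "(real^'k^'m) \<times> (real^'k^'n)"
  assumes "invertible A"
  shows "theta A (theta (matrix_inv A) z) = z" and "theta (matrix_inv A) (theta A z) = z"
proof -
  have "transpose A ** transpose (matrix_inv A) = mat 1"
    by (metis assms matrix_inv_left matrix_transpose_mul transpose_mat)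
  then show "theta A (theta (matrix_inv A) z) = z" "theta (matrix_inv A) (theta A z) = z"
    using assms
    by (simp_all add: theta_def prod_eq_iff matrix_mul_assoc[symmetric] matrix_inv_left
        matrix_inv_right matrix_inv_matrix_inv transpose_matrix_inv_mult_transpose)
qed

lemma bounded_linear_theta: "bounded_linear (theta C :: (real^'k^'m) \<times> (real^'k^'n) \<Rightarrow> _)"
proof -
  have "linear (theta C :: (real^'k^'m) \<times> (real^'k^'n) \<Rightarrow> _)"
    by (rule linearI) (simp_all add: theta_def matrix_add_rdistrib scalar_matrix_assoc)
  then show ?thesis by (simp add: linear_conv_bounded_linear)
qed

lemma the1_eq_iff: "\<exists>!x. P x \<Longrightarrow> (THE x. P x) = a \<longleftrightarrow> P a"
  using theI'[of P] the1_equality[of P a] by blast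

context
  fixes f :: "real^'n^'m \<Rightarrow> real"
  assumes strongly_convex: "strongly_convex f" and differentiable: "\<And>x. f differentiable (at x)"
begin

lemma S1hat_eq_iff:
  assumes "full_col_rank (V::real^'k^'n)"
  shows "S1hat f V = U \<longleftrightarrow> (\<forall>U'. Fobj f U V \<le> Fobj f U' V)"
proof -
  have "\<exists>!U. \<forall>U'. Fobj f U V \<le> Fobj f U' V"
    using strongly_convex_linear_comp_ex1_min[OF strongly_convex differentiable
        linear_matrix_mult_right inj_matrix_mult_transpose_right[OF assms]]
    by (simp add: Fobj_def)
  then show ?thesis unfolding S1hat_def by (rule the1_eq_iff)
qed

lemma S2hat_eq_iff:
  assumes "full_col_rank (U::real^'k^'m)"
  shows "S2hat f U = V \<longleftrightarrow> (\<forall>V'::real^'k^'n. Fobj f U V \<le> Fobj f U V')"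
proof -
  have "\<exists>!V::real^'k^'n. \<forall>V'. Fobj f U V \<le> Fobj f U V'"
    using strongly_convex_linear_comp_ex1_min[OF strongly_convex differentiable
        linear_matrix_mult_transpose_left inj_matrix_mult_transpose_left[OF assms]]
    by (simp add: Fobj_def)
  then show ?thesis unfolding S2hat_def by (rule the1_eq_iff)
qed

lemma critical_point_iff_S1hat_S2hat:
  fixes U :: "real^'k^'m" and V :: "real^'k^'n"
  assumes "full_col_rank U" and "full_col_rank V"
  shows "critical_point f U V \<longleftrightarrow> S1hat f V = U \<and> S2hat f U = V"
proof -
  have "(\<forall>U'. f (U ** transpose V) \<le> f (U' ** transpose V)) \<longleftrightarrow>
      ((\<lambda>X. f (X ** transpose V)) has_derivative (\<lambda>_. 0)) (at U)"
    by (rule strongly_convex_linear_comp_min_iff_critical[OF strongly_convex differentiable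
          linear_matrix_mult_right])
  moreover have "(\<forall>V'. f (U ** transpose V) \<le> f (U ** transpose V')) \<longleftrightarrow>
      ((\<lambda>Y. f (U ** transpose Y)) has_derivative (\<lambda>_. 0)) (at V)"
    by (rule strongly_convex_linear_comp_min_iff_critical[OF strongly_convex differentiable
          linear_matrix_mult_transpose_left])
  ultimately show ?thesis
    unfolding critical_point_iff_partial[OF differentiable] S1hat_eq_iff[OF assms(2)]
      S2hat_eq_iff[OF assms(1)] Fobj_def
    by blast
qed

lemma S1hat_mult_transpose_inv:
  fixes V :: "real^'k^'n" and A :: "real^'k^'k"
  assumes V: "full_col_rank V" and A: "invertible A"
  shows "S1hat f (V ** transpose (matrix_inv A)) = S1hat f V ** A"
proof -
  let ?B = "transpose (matrix_inv A)"
  have "full_col_rank (V ** ?B)"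
    using full_col_rank_mult_invertible[OF V transpose_invertible[OF invertible_matrix_inv[OF A]]] .
  moreover have "Fobj f (S1hat f V ** A) (V ** ?B) \<le> Fobj f U' (V ** ?B)" for U'
  proof -
    have "Fobj f (S1hat f V ** A) (V ** ?B) = Fobj f (S1hat f V) V"
      using A by (simp add: Fobj_mult_right matrix_mul_assoc[symmetric]
          transpose_matrix_inv_mult_transpose)
    also have "\<dots> \<le> Fobj f (U' ** matrix_inv A) V" using S1hat_eq_iff[OF V] by blast
    also have "\<dots> = Fobj f U' (V ** ?B)" by (rule Fobj_mult_right)
    finally show ?thesis .
  qed
  ultimately show ?thesis using S1hat_eq_iff by blast
qed

lemma S2hat_mult_invertible:
  fixes W :: "real^'k^'m" and A :: "real^'k^'k"
  assumes W: "full_col_rank W" and A: "invertible A"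
  shows "S2hat f (W ** A) = (S2hat f W :: real^'k^'n) ** transpose (matrix_inv A)"
proof -
  let ?B = "transpose (matrix_inv A)"
  have "Fobj f (W ** A) (S2hat f W ** ?B) \<le> Fobj f (W ** A) V'" for V' :: "real^'k^'n"
  proof -
    have "Fobj f (W ** A) (S2hat f W ** ?B) = Fobj f W (S2hat f W)"
      using A by (simp add: Fobj_mult_right matrix_mul_assoc[symmetric]
          transpose_matrix_inv_mult_transpose)
    also have "\<dots> \<le> Fobj f W (V' ** transpose A)" using S2hat_eq_iff[OF W] by blast
    also have "\<dots> = Fobj f (W ** A) V'" by (rule Fobj_mult_right[symmetric])
    finally show ?thesis .
  qed
  then show ?thesis using S2hat_eq_iff[OF full_col_rank_mult_invertible[OF W A]] by blast
qed

lemma Somega_theta: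
  fixes UV :: "(real^'k^'m) \<times> (real^'k^'n)" and A :: "real^'k^'k"
  assumes "UV \<in> Domega f \<omega>" and A: "invertible A"
  shows "theta A UV \<in> Domega f \<omega>" and "Somega f \<omega> (theta A UV) = theta A (Somega f \<omega> UV)"
proof -
  obtain U V where UV: "UV = (U, V)" by (cases UV)
  let ?B = "transpose (matrix_inv A)" and ?W = "fst (Somega f \<omega> (U, V))"
  have V: "full_col_rank V" and W: "full_col_rank ?W"
    using assms(1) by (simp_all add: UV Domega_iff)
  have theta: "theta A UV = (U ** A, V ** ?B)" by (simp add: UV theta_def)
  have fst_theta: "fst (Somega f \<omega> (U ** A, V ** ?B)) = ?W ** A"
    by (simp add: fst_Somega S1hat_mult_transpose_inv[OF V A] matrix_lincomb_mult_right)
  show "theta A UV \<in> Domega f \<omega>"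
    using full_col_rank_mult_invertible[OF V transpose_invertible[OF invertible_matrix_inv[OF A]]]
      full_col_rank_mult_invertible[OF W A]
    by (simp add: theta Domega_iff fst_theta)
  show "Somega f \<omega> (theta A UV) = theta A (Somega f \<omega> UV)"
    unfolding prod_eq_iff theta
    by (simp add: UV theta_def fst_theta snd_Somega[of _ _ "U ** A"] snd_Somega[of _ _ U]
        S2hat_mult_invertible[OF W A] matrix_lincomb_mult_right)
qed

lemma Somega_has_derivative_theta:
  fixes UV :: "(real^'k^'m) \<times> (real^'k^'n)" and A :: "real^'k^'k"
  assumes "UV \<in> Domega f \<omega>" and D: "(Somega f \<omega> has_derivative D) (at UV)" and A: "invertible A"
  shows "(Somega f \<omega> has_derivative (theta A \<circ> D \<circ> theta (matrix_inv A))) (at (theta A UV))"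
proof -
  obtain N where "open N" "UV \<in> N" "N \<subseteq> Domega f \<omega>"
    using Domega_neighbourhood assms(1) has_derivative_continuous[OF D] by blast
  then show ?thesis
    using Somega_theta(2)[OF _ A] theta_matrix_inv[OF A]
    by (intro has_derivative_conjugate[OF D bounded_linear_theta bounded_linear_theta]) auto
qed

end

theorem mainTheorem2:
  fixes f :: "real^'n^'m \<Rightarrow> real" and \<omega> :: real
  assumes smooth: "smooth_fun f"
    and sconv: "strongly_convex f"
    and omega: "\<omega> \<noteq> 0"
  shows
    "(\<forall>(U::real^'k^'m) (V::real^'k^'n). (U, V) \<in> Domega f \<omega> \<longrightarrow>
        (Somega f \<omega> (U, V) = (U, V) \<longleftrightarrow>
           full_col_rank U \<and> full_col_rank V \<and> critical_point f U V))
   \<and> (\<forall>(U::real^'k^'m) (V::real^'k^'n).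
        full_col_rank U \<and> full_col_rank V \<and> critical_point f U V \<longrightarrow>
        (U, V) \<in> Domega f \<omega> \<and> Somega f \<omega> (U, V) = (U, V))
   \<and> (\<forall>(UV::(real^'k^'m) \<times> (real^'k^'n)) (A::real^'k^'k). UV \<in> Domega f \<omega> \<and> invertible A \<longrightarrow>
        theta A UV \<in> Domega f \<omega> \<and> Somega f \<omega> (theta A UV) = theta A (Somega f \<omega> UV))
   \<and> (\<forall>(UV::(real^'k^'m) \<times> (real^'k^'n)) (A::real^'k^'k) D.
        UV \<in> Domega f \<omega> \<and> Somega f \<omega> UV = UV \<and> (Somega f \<omega> has_derivative D) (at UV)
        \<and> invertible A \<longrightarrow>
        (Somega f \<omega> has_derivative (theta A \<circ> D \<circ> theta (matrix_inv A))) (at (theta A UV)))"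
proof -
  have diff: "\<And>x. f differentiable (at x)"
    using smooth unfolding smooth_fun_def by (metis iter_dderiv.simps(1))
  note fixed_iff = Somega_fixed_iff[OF omega]
    and critical_iff = critical_point_iff_S1hat_S2hat[OF sconv diff]
  have fst_Somega_fixed: "fst (Somega f \<omega> (U, V)) = U" if "S1hat f V = U" for U V
    using that by (simp add: fst_Somega scaleR_collapse)
  have "Somega f \<omega> (U, V) = (U, V) \<longleftrightarrow>
      full_col_rank U \<and> full_col_rank V \<and> critical_point f U V"
    if "(U, V) \<in> Domega f \<omega>" for U :: "real^'k^'m" and V :: "real^'k^'n"
    using that fixed_iff critical_iff fst_Somega_fixed by (metis Domega_iff)
  moreover have "(U, V) \<in> Domega f \<omega> \<and> Somega f \<omega> (U, V) = (U, V)"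
    if "full_col_rank U" "full_col_rank V" "critical_point f U V"
    for U :: "real^'k^'m" and V :: "real^'k^'n"
  proof -
    have "S1hat f V = U" "S2hat f U = V" using that critical_iff by blast+
    then show ?thesis
      using that fixed_iff[of f U V] fst_Somega_fixed[of V U] by (simp add: Domega_iff)
  qed
  ultimately show ?thesis
    using Somega_theta[OF sconv diff] Somega_has_derivative_theta[OF sconv diff] by blast
qed

end
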